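(* Let $A_{1}\in \mathbb{C}^{m\times n}$, $b_{1}\in \mathbb{C}^{m}$, $A_{2}\in \mathbb{C}^{k\times n}$ with $r(A_{2})=k\geq 1$, and $b_{2}\in \mathbb{C}^{k}$. Define the subspaces \[ \mathcal{X}=P_{N(A_{2})}R(A_{1}^{*})=N(A_{2})\cap (N(A_{2})\cap N(A_{1}))^{\perp},\qquad \mathcal{Y}=N(A_{1})\oplus (A_{1}^{*}A_{1})^{\dagger}\big(N(A_{1})+N(A_{2})\big)^{\perp}. \] Then $\mathcal{X}$ and $\mathcal{Y}$ are complementary subspaces of $\mathbb{C}^n$ with \[ P_{\mathcal{X},\mathcal{Y}}=I-P_{\mathcal{Y},\mathcal{X}}=\big(A_1 (I-A_{2}^{\dagger}A_{2})\big)^{\dagger}A_1, \] and the following hold: 1. Every solution of the problem $\min_{x\in \mathbb{C}^{n}}\|A_{1}x-b_{1}\|^{2}$ subject to $A_{2}x=b_{2}$ lies in the set \[ \Xi =\{A_{1}^{\dagger}b_{1}+P_{\mathcal{Y},\mathcal{X}}(A_{2}^{\dagger}b_{2}-A_{1}^{\dagger}b_{1})+z:\ z\in N(A_{1})\cap N(A_{2})\}. \] 2. The element of $\Xi$ with the smallest Euclidean norm is $\xi:=A_{1}^{\dagger}b_{1}+P_{\mathcal{Y},\mathcal{X}}(A_{2}^{\dagger}b_{2}-A_{1}^{\dagger}b_{1})$. 3. For any $y\in\mathbb{C}^n$, the solution of $\min_{x\in\Xi}\|x-y\|$ is $\psi(y):=\xi+P_{N(A_1)\cap N(A_2)}\,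y$.
   Context: $A^{*}$ is the conjugate transpose, $A^{\dagger}$ the Moore–Penrose inverse, $r(A)$, $R(A)$, $N(A)$ the rank, range and null space of $A$; $\|\cdot\|$ is the Euclidean norm. For a subspace $S$, $S^{\perp}$ is its orthogonal complement, $P_S$ the orthogonal projector onto $S$, and for a matrix $B$, $BS=\{Bs:s\in S\}$. For complementary subspaces $L,M$ of $\mathbb{C}^n$, $P_{L,M}$ is the oblique projector onto $L$ along $M$ (the idempotent matrix with range $L$ and null space $M$). $\oplus$ denotes direct sum. *)

theory Defs
  imports "HOL-Analysis.Analysis"
begin

definition cadj :: "complex^'n^'m \<Rightarrow> complex^'m^'n" where
  "cadj A = (\<chi> i j. cnj (A $ j $ i))"

definition cinner :: "complex^'n \<Rightarrow> complex^'n \<Rightarrow> complex" where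
  "cinner x y = (\<Sum>i\<in>UNIV. x $ i * cnj (y $ i))"

definition nullsp :: "complex^'n^'m \<Rightarrow> (complex^'n) set" where
  "nullsp A = {x. A *v x = 0}"

definition rangesp :: "complex^'n^'m \<Rightarrow> (complex^'m) set" where
  "rangesp A = range (\<lambda>x. A *v x)"

definition orthc :: "(complex^'n) set \<Rightarrow> (complex^'n) set" where
  "orthc S = {x. \<forall>y\<in>S. cinner x y = 0}"

definition mpinv :: "complex^'n^'m \<Rightarrow> complex^'m^'n" where
  "mpinv A = (THE X. A ** X ** A = A \<and> X ** A ** X = X \<and>
                     cadj (A ** X) = A ** X \<and> cadj (X ** A) = X ** A)"

definition oproj :: "(complex^'n) set \<Rightarrow> complex^'n^'n" where
  "oproj S = (THE P. P ** P = P \<and> cadj P = P \<and> rangesp P = S)"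

definition obproj :: "(complex^'n) set \<Rightarrow> (complex^'n) set \<Rightarrow> complex^'n^'n" where
  "obproj L M = (THE P. P ** P = P \<and> rangesp P = L \<and> nullsp P = M)"

definition csubspace :: "(complex^'n) set \<Rightarrow> bool" where
  "csubspace S \<longleftrightarrow> 0 \<in> S \<and> (\<forall>x\<in>S. \<forall>y\<in>S. x + y \<in> S) \<and> (\<forall>c. \<forall>x\<in>S. c *s x \<in> S)"

definition complementary :: "(complex^'n) set \<Rightarrow> (complex^'n) set \<Rightarrow> bool" where
  "complementary L M \<longleftrightarrow> csubspace L \<and> csubspace M \<and> L \<inter> M = {0} \<and>
     (\<forall>x. \<exists>u\<in>L. \<exists>v\<in>M. x = u + v)"

definition setsum :: "(complex^'n) set \<Rightarrow> (complex^'n) set \<Rightarrow> (complex^'n) set" where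
  "setsum S T = {u + v | u v. u \<in> S \<and> v \<in> T}"

definition Xsp :: "complex^'n^'m \<Rightarrow> complex^'n^'k \<Rightarrow> (complex^'n) set" where
  "Xsp A1 A2 = (\<lambda>x. oproj (nullsp A2) *v x) ` rangesp (cadj A1)"

definition Ysp :: "complex^'n^'m \<Rightarrow> complex^'n^'k \<Rightarrow> (complex^'n) set" where
  "Ysp A1 A2 = setsum (nullsp A1)
     ((\<lambda>x. mpinv (cadj A1 ** A1) *v x) ` orthc (setsum (nullsp A1) (nullsp A2)))"

definition lse_solutions ::
  "complex^'n^'m \<Rightarrow> complex^'m \<Rightarrow> complex^'n^'k \<Rightarrow> complex^'k \<Rightarrow> (complex^'n) set" where
  "lse_solutions A1 b1 A2 b2 = {x. A2 *v x = b2 \<and>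
      (\<forall>x'. A2 *v x' = b2 \<longrightarrow> (norm (A1 *v x - b1))\<^sup>2 \<le> (norm (A1 *v x' - b1))\<^sup>2)}"

definition xi_vec ::
  "complex^'n^'m \<Rightarrow> complex^'m \<Rightarrow> complex^'n^'k \<Rightarrow> complex^'k \<Rightarrow> complex^'n" where
  "xi_vec A1 b1 A2 b2 = mpinv A1 *v b1 +
      obproj (Ysp A1 A2) (Xsp A1 A2) *v (mpinv A2 *v b2 - mpinv A1 *v b1)"

definition Xi_set ::
  "complex^'n^'m \<Rightarrow> complex^'m \<Rightarrow> complex^'n^'k \<Rightarrow> complex^'k \<Rightarrow> (complex^'n) set" where
  "Xi_set A1 b1 A2 b2 = {xi_vec A1 b1 A2 b2 + z | z. z \<in> nullsp A1 \<inter> nullsp A2}"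

end

theory Submission
  imports Defs
begin

text \<open>Write \<open>Q\<close> for the orthogonal projector onto \<open>N(A\<^sub>2)\<close> and \<open>B = A\<^sub>1 Q\<close>.
  The Moore--Penrose inverse is characterised pointwise: \<open>A\<^sup>\<dagger> y\<close> is the unique solution
  of the normal equation \<open>A\<^sup>* A x = A\<^sup>* y\<close> lying in \<open>R(A\<^sup>*)\<close>. Hence \<open>P = B\<^sup>\<dagger> A\<^sub>1\<close>
  is idempotent, with range \<open>R(B\<^sup>*) = N(A\<^sub>2) \<inter> (N(A\<^sub>2) \<inter> N(A\<^sub>1))\<^sup>\<bottom>\<close>, and its null
  space consists of the \<open>x\<close> with \<open>A\<^sub>1\<^sup>* A\<^sub>1 x \<bottom> N(A\<^sub>1) + N(A\<^sub>2)\<close>, which is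
  \<open>N(A\<^sub>1) \<oplus> (A\<^sub>1\<^sup>* A\<^sub>1)\<^sup>\<dagger> (N(A\<^sub>1) + N(A\<^sub>2))\<^sup>\<bottom>\<close>; so \<open>P = P\<^sub>X\<^sub>,\<^sub>Y\<close>.

  Every feasible point differs from \<open>A\<^sub>2\<^sup>\<dagger> b\<^sub>2\<close> by a vector of \<open>N(A\<^sub>2)\<close>, on which
  \<open>A\<^sub>1 = B\<close>; so the constrained problem is an ordinary least-squares problem for \<open>B\<close>,
  whose solutions differ from \<open>\<xi> = A\<^sub>2\<^sup>\<dagger> b\<^sub>2 + B\<^sup>\<dagger> (b\<^sub>1 - A\<^sub>1 A\<^sub>2\<^sup>\<dagger> b\<^sub>2)\<close>
  by elements of \<open>N(A\<^sub>1) \<inter> N(A\<^sub>2)\<close>. As \<open>\<xi>\<close> is orthogonal to that space, Pythagoras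
  gives the minimum-norm and nearest-point statements.\<close>

section \<open>Complex inner product and adjoints\<close>

lemma cinner_add_left: "cinner (x + y) z = cinner x z + cinner y z"
  by (simp add: cinner_def distrib_right sum.distrib)

lemma cinner_add_right: "cinner x (y + z) = cinner x y + cinner x z"
  by (simp add: cinner_def distrib_left sum.distrib)

lemma cinner_diff_left: "cinner (x - y) z = cinner x z - cinner y z"
  by (simp add: cinner_def left_diff_distrib sum_subtractf)

lemma cinner_diff_right: "cinner x (y - z) = cinner x y - cinner x z"
  by (simp add: cinner_def right_diff_distrib sum_subtractf)

lemma cinner_zero_left [simp]: "cinner 0 y = 0"
  by (simp add: cinner_def)

lemma cinner_zero_right [simp]: "cinner x 0 = 0"
  by (simp add: cinner_def)

lemma cinner_smult_left: "cinner (c *s x) y = c * cinner x y"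
  by (simp add: cinner_def sum_distrib_left mult.assoc)

lemma cinner_smult_right: "cinner x (c *s y) = cnj c * cinner x y"
  by (simp add: cinner_def sum_distrib_left mult_ac)

lemma cinner_commute: "cinner y x = cnj (cinner x y)"
  by (simp add: cinner_def mult.commute)

lemma cinner_eq_0_sym: "cinner x y = 0 \<Longrightarrow> cinner y x = 0"
  by (metis cinner_commute complex_cnj_zero)

lemma Re_cinner: "Re (cinner x y) = inner x y"
  by (simp add: cinner_def inner_vec_def inner_complex_def)

lemma cinner_self: "cinner x x = of_real ((norm x)\<^sup>2)"
proof -
  have "Re (cinner x x) = (norm x)\<^sup>2"
    by (simp add: Re_cinner power2_norm_eq_inner)
  moreover have "Im (cinner x x) = 0"
    by (simp add: cinner_def)
  ultimately show ?thesis
    by (simp add: complex_eq_iff)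
qed

lemma cinner_self_eq_0 [simp]: "cinner x x = 0 \<longleftrightarrow> x = 0"
  by (simp add: cinner_self)

lemma cinner_eq_0_all_imp: "(\<And>x. cinner x y = 0) \<Longrightarrow> y = 0"
  using cinner_self_eq_0 by blast

lemma pythagoras_cinner:
  assumes "cinner p q = 0"
  shows "(norm (p + q))\<^sup>2 = (norm p)\<^sup>2 + (norm q)\<^sup>2"
proof -
  have "cinner (p + q) (p + q) = cinner p p + cinner q q"
    using assms cinner_eq_0_sym[OF assms] by (simp add: cinner_add_left cinner_add_right)
  then show ?thesis
    unfolding cinner_self of_real_add[symmetric] of_real_eq_iff .
qed

lemma cadj_cadj [simp]: "cadj (cadj A) = A"
  by (simp add: cadj_def vec_eq_iff)

lemma cadj_mult: "cadj (A ** B) = cadj B ** cadj A"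
  by (simp add: cadj_def matrix_matrix_mult_def vec_eq_iff mult.commute)

lemma cinner_cadj: "cinner (A *v x) y = cinner x (cadj A *v y)"
proof -
  have "cinner (A *v x) y = (\<Sum>i\<in>UNIV. \<Sum>j\<in>UNIV. A$i$j * x$j * cnj (y$i))"
    by (simp add: cinner_def matrix_vector_mult_def sum_distrib_right)
  also have "\<dots> = (\<Sum>j\<in>UNIV. \<Sum>i\<in>UNIV. A$i$j * x$j * cnj (y$i))"
    by (rule sum.swap)
  also have "\<dots> = cinner x (cadj A *v y)"
    by (simp add: cinner_def matrix_vector_mult_def cadj_def sum_distrib_left mult_ac)
  finally show ?thesis .
qed

lemma cinner_cadj_right: "cinner x (A *v y) = cinner (cadj A *v x) y"
  using cinner_cadj[of "cadj A" x y] by simp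

lemma cadj_eq_if_cinner_symmetric:
  fixes M :: "complex^'n^'n"
  assumes "\<And>x y. cinner (M *v x) y = cinner x (M *v y)"
  shows "cadj M = M"
proof -
  have "cadj M *v y - M *v y = 0" for y
    by (rule cinner_eq_0_all_imp) (simp add: cinner_diff_right assms cinner_cadj[symmetric])
  then show ?thesis
    by (simp add: matrix_eq)
qed

lemma cadj_mult_self_eq_0: "cadj A *v (A *v x) = 0 \<Longrightarrow> A *v x = 0"
  by (metis cinner_cadj cinner_self_eq_0 cinner_zero_right cadj_cadj)

lemma matrix_vector_mult_smult: "A *v (c *s x) = c *s (A *v (x :: complex^'n))"
  by (simp add: matrix_vector_mult_def vec_eq_iff sum_distrib_left mult_ac)

section \<open>Complex subspaces and orthogonal complements\<close>

lemma csubspace_iff_vec_subspace: "csubspace S \<longleftrightarrow> vec.subspace S"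
  by (simp add: csubspace_def vec.subspace_def)

lemma csubspace_0: "csubspace S \<Longrightarrow> 0 \<in> S"
  by (simp add: csubspace_def)

lemma csubspace_add: "csubspace S \<Longrightarrow> x \<in> S \<Longrightarrow> y \<in> S \<Longrightarrow> x + y \<in> S"
  by (simp add: csubspace_def)

lemma csubspace_smult: "csubspace S \<Longrightarrow> x \<in> S \<Longrightarrow> c *s x \<in> S"
  by (simp add: csubspace_def)

lemma csubspace_diff: "csubspace S \<Longrightarrow> x \<in> S \<Longrightarrow> y \<in> S \<Longrightarrow> x - y \<in> S"
  by (simp add: csubspace_iff_vec_subspace vec.subspace_diff)

lemma csubspace_Int: "csubspace S \<Longrightarrow> csubspace T \<Longrightarrow> csubspace (S \<inter> T)"
  by (simp add: csubspace_def)

lemma subspace_if_csubspace: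
  assumes "csubspace S"
  shows "subspace S"
proof -
  have scaleR: "c *\<^sub>R x = (of_real c :: complex) *s x" for c and x :: "complex^'n"
    unfolding vec_eq_iff
    by (metis vector_scaleR_component scaleR_conv_of_real vector_smult_component)
  show ?thesis
    using assms by (auto simp: subspace_def csubspace_def scaleR)
qed

lemma nullsp_csubspace: "csubspace (nullsp A)"
  by (auto simp: csubspace_def nullsp_def matrix_vector_right_distrib matrix_vector_mult_smult)

lemma rangesp_csubspace: "csubspace (rangesp A)"
  unfolding csubspace_def rangesp_def
proof (intro conjI ballI allI)
  show "0 \<in> range ((*v) A)"
    by (metis matrix_vector_mult_0_right rangeI)
  fix x y assume "x \<in> range ((*v) A)" "y \<in> range ((*v) A)"
  then obtain a b where "x = A *v a" "y = A *v b"
    by blast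
  then have "x + y = A *v (a + b)"
    by (simp add: matrix_vector_right_distrib)
  then show "x + y \<in> range ((*v) A)"
    by blast
next
  fix c x assume "x \<in> range ((*v) A)"
  then obtain a where "x = A *v a"
    by blast
  then have "c *s x = A *v (c *s a)"
    by (simp add: matrix_vector_mult_smult)
  then show "c *s x \<in> range ((*v) A)"
    by blast
qed

lemma rangespI: "A *v x \<in> rangesp A"
  by (simp add: rangesp_def)

lemma orthc_csubspace: "csubspace (orthc S)"
  by (auto simp: csubspace_def orthc_def cinner_add_left cinner_smult_left)

lemma orthcD: "x \<in> orthc S \<Longrightarrow> y \<in> S \<Longrightarrow> cinner x y = 0"
  by (simp add: orthc_def)

lemma orthcD': "x \<in> orthc S \<Longrightarrow> y \<in> S \<Longrightarrow> cinner y x = 0"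
  by (simp add: orthcD cinner_eq_0_sym)

lemma orthc_self_eq_0: "x \<in> S \<Longrightarrow> x \<in> orthc S \<Longrightarrow> x = 0"
  using orthcD cinner_self_eq_0 by blast

lemma orthc_antimono: "S \<subseteq> T \<Longrightarrow> orthc T \<subseteq> orthc S"
  by (auto simp: orthc_def)

lemma orthc_setsum:
  assumes "0 \<in> S" "0 \<in> T"
  shows "orthc (setsum S T) = orthc S \<inter> orthc T"
proof
  show "orthc (setsum S T) \<subseteq> orthc S \<inter> orthc T"
  proof (intro subsetI IntI)
    fix x assume x: "x \<in> orthc (setsum S T)"
    have "S \<subseteq> setsum S T" "T \<subseteq> setsum S T"
      using assms unfolding setsum_def by (auto, metis add_0_right, metis add_0)
    then show "x \<in> orthc S" "x \<in> orthc T"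
      using x orthc_antimono by blast+
  qed
  show "orthc S \<inter> orthc T \<subseteq> orthc (setsum S T)"
    by (auto simp: orthc_def setsum_def cinner_add_right)
qed

lemma rangesp_cadj_subset_orthc_nullsp: "rangesp (cadj A) \<subseteq> orthc (nullsp A)"
  by (auto simp: rangesp_def orthc_def nullsp_def cinner_cadj)

lemma rangesp_cadj_Int_nullsp: "x \<in> rangesp (cadj A) \<Longrightarrow> A *v x = 0 \<Longrightarrow> x = 0"
  using rangesp_cadj_subset_orthc_nullsp[of A] orthc_self_eq_0[of x "nullsp A"]
  by (auto simp: nullsp_def)

lemma orthc_decomposition:
  assumes S: "csubspace S"
  shows "\<exists>u\<in>S. x - u \<in> orthc S"
proof -
  have span: "span S = S"
    using subspace_if_csubspace[OF S] by (simp add: span_eq_iff)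
  obtain u z where u: "u \<in> span S" and z: "\<And>w. w \<in> span S \<Longrightarrow> orthogonal z w"
    and x: "x = u + z"
    using orthogonal_subspace_decomp_exists[of S x] by blast
  \<comment> \<open>Real orthogonality to the complex subspace \<open>S\<close> also kills the imaginary part,
    since \<open>\<i> w \<in> S\<close>.\<close>
  have "cinner z w = 0" if w: "w \<in> S" for w
  proof -
    have "Re (cinner z w) = 0"
      using z[of w] w span by (simp add: Re_cinner orthogonal_def)
    moreover have "Re (cinner z (\<i> *s w)) = 0"
      using z[of "\<i> *s w"] csubspace_smult[OF S w] span by (simp add: Re_cinner orthogonal_def)
    then have "Im (cinner z w) = 0"
      by (simp add: cinner_smult_right)
    ultimately show ?thesis
      by (simp add: complex_eq_iff)
  qed
  then show ?thesis
    using u x span by (intro bexI[of _ u]) (auto simp: orthc_def)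
qed

lemma orthc_decomposition_unique:
  assumes S: "csubspace S" and "u \<in> S" "x - u \<in> orthc S" "u' \<in> S" "x - u' \<in> orthc S"
  shows "u = u'"
proof -
  have "u - u' = (x - u') - (x - u)"
    by simp
  then have "u - u' \<in> orthc S"
    using assms by (metis orthc_csubspace csubspace_diff)
  moreover have "u - u' \<in> S"
    using assms by (simp add: csubspace_diff)
  ultimately show ?thesis
    using orthc_self_eq_0 by fastforce
qed

section \<open>Orthogonal projectors\<close>

lemma matrix_of_unique_solution:
  fixes R :: "complex^'n \<Rightarrow> complex^'m \<Rightarrow> bool"
  assumes ex1: "\<And>y. \<exists>!x. R y x"
    and add: "\<And>y x y' x'. R y x \<Longrightarrow> R y' x' \<Longrightarrow> R (y + y') (x + x')"
    and smult: "\<And>c y x. R y x \<Longrightarrow> R (c *s y) (c *s x)"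
  shows "\<exists>M :: complex^'n^'m. \<forall>y. R y (M *v y)"
proof -
  define f where "f y = (THE x. R y x)" for y
  have f: "R y (f y)" for y
    unfolding f_def using ex1 by (rule theI')
  have f_eq: "f y = x" if "R y x" for x y
    using ex1 f that by blast
  have "Vector_Spaces.linear (*s) (*s) f"
    by (simp add: Vector_Spaces.linear_iff vec.vector_space_axioms f_eq add smult f)
  then have "matrix f *v y = f y" for y
    by (rule matrix_works)
  then show ?thesis
    using f by (intro exI[of _ "matrix f"]) simp
qed

lemma nullsp_subset_orthc_rangesp_cadj: "nullsp A \<subseteq> orthc (rangesp (cadj A))"
  by (auto simp: rangesp_def orthc_def nullsp_def cinner_cadj_right)

lemma cadj_eq_if_orthogonal_residual:
  fixes M :: "complex^'n^'n"
  assumes range: "\<And>x. M *v x \<in> V" and residual: "\<And>x. x - M *v x \<in> orthc V"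
  shows "cadj M = M"
proof (rule cadj_eq_if_cinner_symmetric)
  fix x y
  have "cinner (M *v x) y = cinner (M *v x) (M *v y)"
    using orthcD'[OF residual range] by (metis cinner_diff_right diff_eq_eq add_0)
  also have "\<dots> = cinner x (M *v y)"
    using orthcD[OF residual range] by (metis cinner_diff_left diff_eq_eq add_0)
  finally show "cinner (M *v x) y = cinner x (M *v y)" .
qed

lemma orthogonal_projection_matrix_exists:
  fixes S :: "(complex^'n) set"
  assumes S: "csubspace S"
  shows "\<exists>P :: complex^'n^'n. \<forall>x. P *v x \<in> S \<and> x - P *v x \<in> orthc S"
proof (rule matrix_of_unique_solution)
  show "\<exists>!u. u \<in> S \<and> x - u \<in> orthc S" for x
    using orthc_decomposition[OF S, of x] orthc_decomposition_unique[OF S] by blast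
  show "u + v \<in> S \<and> x + y - (u + v) \<in> orthc S"
    if "u \<in> S \<and> x - u \<in> orthc S" "v \<in> S \<and> y - v \<in> orthc S" for x u y v
    using that csubspace_add[OF S, of u v] csubspace_add[OF orthc_csubspace, of "x - u" S "y - v"]
    unfolding add_diff_add by simp
  show "c *s u \<in> S \<and> c *s x - c *s u \<in> orthc S" if "u \<in> S \<and> x - u \<in> orthc S" for c x u
    using that csubspace_smult[OF S, of u c] csubspace_smult[OF orthc_csubspace, of "x - u" S c]
    unfolding vector_ssub_ldistrib[symmetric] by simp
qed

lemma residual_in_orthc_rangesp:
  assumes "Q ** Q = Q" "cadj Q = Q"
  shows "x - Q *v x \<in> orthc (rangesp Q)"
proof -
  have "cinner (x - Q *v x) (Q *v w) = 0" for w
    using assms by (simp add: cinner_cadj_right matrix_vector_mult_diff_distrib matrix_vector_mul_assoc)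
  then show ?thesis
    by (auto simp: orthc_def rangesp_def)
qed

lemma oproj_characterization:
  fixes S :: "(complex^'n) set"
  assumes S: "csubspace S"
  shows "oproj S *v x \<in> S \<and> x - oproj S *v x \<in> orthc S"
proof -
  obtain P :: "complex^'n^'n" where P: "\<And>x. P *v x \<in> S \<and> x - P *v x \<in> orthc S"
    using orthogonal_projection_matrix_exists[OF S] by blast
  have P_eq: "P *v x = u" if "u \<in> S" "x - u \<in> orthc S" for x u
    using orthc_decomposition_unique[OF S] P that by blast
  have fixed: "P *v u = u" if "u \<in> S" for u
    using P_eq[OF that, of u] csubspace_0[OF orthc_csubspace, of S] by simp
  have "P *v (P *v x) = P *v x" for x
    using fixed P by blast
  then have idem: "P ** P = P"
    by (simp add: matrix_eq flip: matrix_vector_mul_assoc)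
  have herm: "cadj P = P"
    using P by (blast intro: cadj_eq_if_orthogonal_residual)
  have range: "rangesp P = S"
  proof
    show "rangesp P \<subseteq> S"
      using P by (auto simp: rangesp_def)
    show "S \<subseteq> rangesp P"
      using fixed rangespI by (metis subsetI)
  qed
  have "Q = P" if Q: "Q ** Q = Q" "cadj Q = Q" "rangesp Q = S" for Q
  proof -
    have "Q *v x = P *v x" for x
      using P_eq rangespI[of Q x] residual_in_orthc_rangesp[OF Q(1,2), of x] Q(3) by simp
    then show ?thesis
      by (simp add: matrix_eq)
  qed
  then have "oproj S = P"
    unfolding oproj_def using idem herm range by (intro the_equality) blast+
  then show ?thesis
    using P by simp
qed

lemma oproj_in: "csubspace S \<Longrightarrow> oproj S *v x \<in> S"
  using oproj_characterization by blast

lemma oproj_residual: "csubspace S \<Longrightarrow> x - oproj S *v x \<in> orthc S"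
  using oproj_characterization by blast

lemma oproj_eq:
  assumes "csubspace S" "u \<in> S" "x - u \<in> orthc S"
  shows "oproj S *v x = u"
  using orthc_decomposition_unique oproj_characterization assms by blast

lemma oproj_fixed: "csubspace S \<Longrightarrow> u \<in> S \<Longrightarrow> oproj S *v u = u"
  by (rule oproj_eq) (auto intro: csubspace_0[OF orthc_csubspace])

lemma oproj_eq_0_iff: "csubspace S \<Longrightarrow> oproj S *v x = 0 \<longleftrightarrow> x \<in> orthc S"
  using oproj_characterization[of S x] oproj_eq[of S 0 x] csubspace_0 by auto

lemma cadj_oproj: "csubspace S \<Longrightarrow> cadj (oproj S) = oproj S"
  by (blast intro: cadj_eq_if_orthogonal_residual oproj_in oproj_residual)

section \<open>The Moore--Penrose inverse\<close>

definition penrose :: "complex^'n^'m \<Rightarrow> complex^'m^'n \<Rightarrow> bool" where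
  "penrose A X \<longleftrightarrow> A ** X ** A = A \<and> X ** A ** X = X \<and>
     cadj (A ** X) = A ** X \<and> cadj (X ** A) = X ** A"

lemma normal_equation_solution_unique:
  assumes "x \<in> rangesp (cadj A)" "x' \<in> rangesp (cadj A)"
    and "cadj A *v (A *v x) = cadj A *v (A *v x')"
  shows "x = x'"
proof -
  have "cadj A *v (A *v (x - x')) = 0"
    using assms(3) by (simp add: matrix_vector_mult_diff_distrib)
  then have "A *v (x - x') = 0"
    by (rule cadj_mult_self_eq_0)
  moreover have "x - x' \<in> rangesp (cadj A)"
    using assms csubspace_diff rangesp_csubspace by blast
  ultimately show ?thesis
    using rangesp_cadj_Int_nullsp[of "x - x'" A] by simp
qed

lemma normal_equation_solution_exists:
  "\<exists>x\<in>rangesp (cadj A). cadj A *v (A *v x) = cadj A *v y"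
proof -
  obtain u where u: "u \<in> rangesp A" and "y - u \<in> orthc (rangesp A)"
    using orthc_decomposition[OF rangesp_csubspace] by blast
  then have "cadj A *v (y - u) = 0"
    by (intro cinner_eq_0_all_imp) (simp add: cinner_cadj_right orthcD' rangespI)
  then have y: "cadj A *v y = cadj A *v u"
    by (simp add: matrix_vector_mult_diff_distrib)
  obtain w where w: "u = A *v w"
    using u unfolding rangesp_def by blast
  obtain x where x: "x \<in> rangesp (cadj A)" and "w - x \<in> orthc (rangesp (cadj A))"
    using orthc_decomposition[OF rangesp_csubspace] by blast
  then have "cinner (A *v (w - x)) (A *v (w - x)) = 0"
    by (simp add: cinner_cadj orthcD rangespI)
  then have "A *v x = u"
    using w by (simp add: matrix_vector_mult_diff_distrib)
  then have "cadj A *v (A *v x) = cadj A *v y"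
    using y by simp
  with x show ?thesis
    by blast
qed

lemma penrose_imp_normal_solution:
  assumes "penrose A X"
  shows "X *v y \<in> rangesp (cadj A) \<and> cadj A *v (A *v (X *v y)) = cadj A *v y"
proof
  have "X = cadj (X ** A) ** X"
    using assms by (simp add: penrose_def)
  then have "X *v y = cadj A *v ((cadj X ** X) *v y)"
    by (simp add: cadj_mult matrix_vector_mul_assoc matrix_mul_assoc)
  then show "X *v y \<in> rangesp (cadj A)"
    by (simp add: rangespI)
  have "cadj A ** (A ** X) = cadj A ** cadj (A ** X)"
    using assms by (simp add: penrose_def)
  also have "\<dots> = cadj (A ** X ** A)"
    by (simp add: cadj_mult matrix_mul_assoc)
  also have "\<dots> = cadj A"
    using assms by (simp add: penrose_def)
  finally show "cadj A *v (A *v (X *v y)) = cadj A *v y"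
    by (simp add: matrix_vector_mul_assoc matrix_mul_assoc)
qed

lemma penrose_if_normal_solution:
  assumes G: "\<And>y. G *v y \<in> rangesp (cadj A) \<and> cadj A *v (A *v (G *v y)) = cadj A *v y"
  shows "penrose A G"
proof -
  have AGA: "A *v (G *v (A *v x)) = A *v x" for x
    using G[of "A *v x"] cadj_mult_self_eq_0[of A "G *v (A *v x) - x"]
    by (simp add: matrix_vector_mult_diff_distrib)
  have "A ** G ** A = A"
    by (simp add: matrix_eq AGA flip: matrix_vector_mul_assoc)
  moreover have "G *v (A *v (G *v y)) = G *v y" for y
    using G[of y] G[of "A *v (G *v y)"] normal_equation_solution_unique[of _ A] by simp
  then have "G ** A ** G = G"
    by (simp add: matrix_eq flip: matrix_vector_mul_assoc)
  moreover have "cadj (A ** G) = A ** G"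
  proof (rule cadj_eq_if_orthogonal_residual[of _ "rangesp A"])
    show "(A ** G) *v y \<in> rangesp A" for y
      by (simp add: rangespI flip: matrix_vector_mul_assoc)
    have "cadj A *v (y - (A ** G) *v y) = 0" for y
      using G[of y] by (simp add: matrix_vector_mult_diff_distrib flip: matrix_vector_mul_assoc)
    then show "y - (A ** G) *v y \<in> orthc (rangesp A)" for y
      using nullsp_subset_orthc_rangesp_cadj[of "cadj A"] by (auto simp: nullsp_def)
  qed
  moreover have "cadj (G ** A) = G ** A"
  proof (rule cadj_eq_if_orthogonal_residual[of _ "rangesp (cadj A)"])
    show "(G ** A) *v x \<in> rangesp (cadj A)" for x
      using G by (simp flip: matrix_vector_mul_assoc)
    have "A *v (x - (G ** A) *v x) = 0" for x
      using AGA[of x] by (simp add: matrix_vector_mult_diff_distrib flip: matrix_vector_mul_assoc)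
    then show "x - (G ** A) *v x \<in> orthc (rangesp (cadj A))" for x
      using nullsp_subset_orthc_rangesp_cadj[of A] by (auto simp: nullsp_def)
  qed
  ultimately show ?thesis
    by (simp add: penrose_def)
qed

lemma mpinv_penrose: "penrose A (mpinv A)"
proof -
  define R where "R y x \<longleftrightarrow> x \<in> rangesp (cadj A) \<and> cadj A *v (A *v x) = cadj A *v y" for y x
  have unique: "x = x'" if "R y x" "R y x'" for y x x'
    using that unfolding R_def by (metis normal_equation_solution_unique)
  have "\<exists>!x. R y x" for y
  proof -
    obtain x where "R y x"
      using normal_equation_solution_exists[of A y] unfolding R_def by blast
    then show ?thesis
      using unique by blast
  qed
  moreover have "R (y + y') (x + x')" if "R y x" "R y' x'" for y x y' x'
    using that rangesp_csubspace csubspace_add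
    by (auto simp: R_def matrix_vector_right_distrib)
  moreover have "R (c *s y) (c *s x)" if "R y x" for c y x
    using that rangesp_csubspace csubspace_smult
    by (auto simp: R_def matrix_vector_mult_smult)
  ultimately have "\<exists>G. \<forall>y. R y (G *v y)"
    by (rule matrix_of_unique_solution)
  then obtain G where RG: "\<And>y. R y (G *v y)"
    by blast
  then have "penrose A G"
    by (intro penrose_if_normal_solution) (simp add: R_def)
  moreover have "X = G" if "penrose A X" for X
  proof -
    have "X *v y = G *v y" for y
      by (rule unique[of y]) (use penrose_imp_normal_solution[OF that] RG in \<open>auto simp: R_def\<close>)
    then show ?thesis
      by (simp add: matrix_eq)
  qed
  ultimately show ?thesis
    unfolding mpinv_def penrose_def[symmetric] by (rule theI)
qed

lemma mpinv_in_rangesp_cadj: "mpinv A *v y \<in> rangesp (cadj A)"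
  using penrose_imp_normal_solution[OF mpinv_penrose] by blast

lemma mpinv_normal_equation: "cadj A *v (A *v (mpinv A *v y)) = cadj A *v y"
  using penrose_imp_normal_solution[OF mpinv_penrose] by blast

lemma mpinv_eq:
  assumes "x \<in> rangesp (cadj A)" "cadj A *v (A *v x) = cadj A *v y"
  shows "mpinv A *v y = x"
  using normal_equation_solution_unique[OF mpinv_in_rangesp_cadj assms(1)]
    mpinv_normal_equation assms(2) by metis

lemma mpinv_eq_0_iff: "mpinv A *v y = 0 \<longleftrightarrow> cadj A *v y = 0"
  using mpinv_normal_equation[of A y] mpinv_eq[of 0 A y] csubspace_0[OF rangesp_csubspace]
  by auto

lemma mpinv_mult_cancel: "v \<in> rangesp (cadj A) \<Longrightarrow> mpinv A *v (A *v v) = v"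
  by (rule mpinv_eq) auto

lemma mult_mpinv_mult: "A *v (mpinv A *v (A *v x)) = A *v x"
  using mpinv_normal_equation[of A "A *v x"] cadj_mult_self_eq_0[of A "mpinv A *v (A *v x) - x"]
  by (simp add: matrix_vector_mult_diff_distrib)

lemma mat_1_minus_mpinv_mult: "mat 1 - mpinv A ** A = oproj (nullsp A)"
proof -
  have "oproj (nullsp A) *v x = x - mpinv A *v (A *v x)" for x
  proof (rule oproj_eq[OF nullsp_csubspace])
    show "x - mpinv A *v (A *v x) \<in> nullsp A"
      by (simp add: nullsp_def matrix_vector_mult_diff_distrib mult_mpinv_mult)
    show "x - (x - mpinv A *v (A *v x)) \<in> orthc (nullsp A)"
      using mpinv_in_rangesp_cadj rangesp_cadj_subset_orthc_nullsp by auto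
  qed
  then show ?thesis
    by (simp add: matrix_eq matrix_vector_mult_diff_rdistrib matrix_vector_mul_assoc)
qed

lemma least_squares_pythagoras:
  "(norm (B *v z + (B *v (mpinv B *v c) - c)))\<^sup>2
    = (norm (B *v z))\<^sup>2 + (norm (B *v (mpinv B *v c) - c))\<^sup>2"
proof (rule pythagoras_cinner)
  have "cadj B *v (B *v (mpinv B *v c) - c) = 0"
    using mpinv_normal_equation[of B c] by (simp add: matrix_vector_mult_diff_distrib)
  then show "cinner (B *v z) (B *v (mpinv B *v c) - c) = 0"
    by (simp add: cinner_cadj)
qed

lemma mpinv_gram_in_rangesp_cadj: "mpinv (cadj A ** A) *v t \<in> rangesp (cadj A)"
  using mpinv_in_rangesp_cadj[of "cadj A ** A" t]
  by (auto simp: rangesp_def cadj_mult matrix_vector_mul_assoc[symmetric])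

lemma gram_mpinv_cancel:
  assumes t: "t \<in> orthc (nullsp A)"
  shows "(cadj A ** A) *v (mpinv (cadj A ** A) *v t) = t"
proof -
  define d where "d = t - (cadj A ** A) *v (mpinv (cadj A ** A) *v t)"
  have "(cadj A ** A) *v d = 0"
    using mpinv_normal_equation[of "cadj A ** A" t]
    by (simp add: d_def cadj_mult matrix_vector_mult_diff_distrib)
  then have "d \<in> nullsp A"
    using cadj_mult_self_eq_0 by (simp add: nullsp_def matrix_vector_mul_assoc)
  moreover have "(cadj A ** A) *v v \<in> orthc (nullsp A)" for v
    using rangesp_cadj_subset_orthc_nullsp rangespI
    by (metis matrix_vector_mul_assoc subsetD)
  then have "d \<in> orthc (nullsp A)"
    using t csubspace_diff[OF orthc_csubspace] unfolding d_def by blast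
  ultimately show ?thesis
    using orthc_self_eq_0 d_def by fastforce
qed

lemma gram_preimage_eq_setsum:
  assumes T: "T \<subseteq> orthc (nullsp A)"
  shows "{x. (cadj A ** A) *v x \<in> T} = setsum (nullsp A) ((\<lambda>t. mpinv (cadj A ** A) *v t) ` T)"
proof (intro equalityI subsetI)
  fix x assume "x \<in> {x. (cadj A ** A) *v x \<in> T}"
  then have t: "(cadj A ** A) *v x \<in> T"
    by simp
  define u where "u = mpinv (cadj A ** A) *v ((cadj A ** A) *v x)"
  have "(cadj A ** A) *v u = (cadj A ** A) *v x"
    unfolding u_def using t T by (blast intro: gram_mpinv_cancel)
  then have "cadj A *v (A *v (x - u)) = 0"
    by (simp add: matrix_vector_mult_diff_distrib matrix_vector_mul_assoc)
  then have "x - u \<in> nullsp A"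
    unfolding nullsp_def by (blast intro: cadj_mult_self_eq_0)
  moreover have "u \<in> (\<lambda>t. mpinv (cadj A ** A) *v t) ` T"
    unfolding u_def using t by blast
  ultimately show "x \<in> setsum (nullsp A) ((\<lambda>t. mpinv (cadj A ** A) *v t) ` T)"
    unfolding setsum_def by (intro CollectI exI[of _ "x - u"] exI[of _ u]) simp
next
  fix x assume "x \<in> setsum (nullsp A) ((\<lambda>t. mpinv (cadj A ** A) *v t) ` T)"
  then obtain n t where n: "A *v n = 0" and t: "t \<in> T"
    and x: "x = n + mpinv (cadj A ** A) *v t"
    unfolding setsum_def nullsp_def by blast
  have "(cadj A ** A) *v x = (cadj A ** A) *v n + (cadj A ** A) *v (mpinv (cadj A ** A) *v t)"
    by (simp add: x matrix_vector_right_distrib)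
  also have "(cadj A ** A) *v n = 0"
    using n by (simp flip: matrix_vector_mul_assoc)
  also have "(cadj A ** A) *v (mpinv (cadj A ** A) *v t) = t"
    using t T by (blast intro: gram_mpinv_cancel)
  finally have "(cadj A ** A) *v x = t"
    by simp
  with t show "x \<in> {x. (cadj A ** A) *v x \<in> T}"
    by simp
qed

lemma nullsp_Int_mpinv_gram_image:
  assumes "0 \<in> T"
  shows "nullsp A \<inter> (\<lambda>t. mpinv (cadj A ** A) *v t) ` T = {0}"
proof
  show "nullsp A \<inter> (\<lambda>t. mpinv (cadj A ** A) *v t) ` T \<subseteq> {0}"
  proof
    fix v assume v: "v \<in> nullsp A \<inter> (\<lambda>t. mpinv (cadj A ** A) *v t) ` T"
    then have "v \<in> rangesp (cadj A)"
      using mpinv_gram_in_rangesp_cadj by blast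
    with v show "v \<in> {0}"
      using rangesp_cadj_Int_nullsp[of v A] by (simp add: nullsp_def)
  qed
  have "mpinv (cadj A ** A) *v 0 \<in> (\<lambda>t. mpinv (cadj A ** A) *v t) ` T"
    using assms by blast
  then show "{0} \<subseteq> nullsp A \<inter> (\<lambda>t. mpinv (cadj A ** A) *v t) ` T"
    by (simp add: nullsp_def)
qed

section \<open>Oblique projectors\<close>

lemma obproj_eq:
  fixes P :: "complex^'n^'n"
  assumes idem: "P ** P = P"
  shows "obproj (rangesp P) (nullsp P) = P"
  unfolding obproj_def
proof (rule the_equality)
  show "P ** P = P \<and> rangesp P = rangesp P \<and> nullsp P = nullsp P"
    using idem by simp
  fix Q assume Q: "Q ** Q = Q \<and> rangesp Q = rangesp P \<and> nullsp Q = nullsp P"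
  \<comment> \<open>Both maps fix their common range and kill their common null space.\<close>
  have "Q *v x = P *v x" for x
  proof -
    have "x - P *v x \<in> nullsp Q"
      using Q idem by (simp add: nullsp_def matrix_vector_mult_diff_distrib matrix_vector_mul_assoc)
    then have "Q *v x = Q *v (P *v x)"
      by (simp add: nullsp_def matrix_vector_mult_diff_distrib)
    moreover obtain w where "P *v x = Q *v w"
      using Q rangespI[of P x] unfolding rangesp_def by blast
    ultimately show ?thesis
      using Q by (simp add: matrix_vector_mul_assoc)
  qed
  then show "Q = P"
    by (simp add: matrix_eq)
qed

lemma obproj_complement:
  fixes P :: "complex^'n^'n"
  assumes idem: "P ** P = P"
  shows "obproj (nullsp P) (rangesp P) = mat 1 - P"
proof -
  have PP: "P *v (P *v x) = P *v x" for x
    using idem by (simp add: matrix_vector_mul_assoc)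
  have I_P: "(mat 1 - P) *v x = x - P *v x" for x
    by (simp add: matrix_vector_mult_diff_rdistrib)
  have "(mat 1 - P) ** (mat 1 - P) = mat 1 - P"
    by (simp add: matrix_eq I_P matrix_vector_mult_diff_distrib PP flip: matrix_vector_mul_assoc)
  moreover have "rangesp (mat 1 - P) = nullsp P"
  proof
    show "rangesp (mat 1 - P) \<subseteq> nullsp P"
      by (auto simp: rangesp_def nullsp_def I_P matrix_vector_mult_diff_distrib PP)
    show "nullsp P \<subseteq> rangesp (mat 1 - P)"
    proof
      fix v assume "v \<in> nullsp P"
      then have "v = (mat 1 - P) *v v"
        by (simp add: nullsp_def I_P)
      then show "v \<in> rangesp (mat 1 - P)"
        by (metis rangespI)
    qed
  qed
  moreover have "nullsp (mat 1 - P) = rangesp P"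
  proof
    show "nullsp (mat 1 - P) \<subseteq> rangesp P"
      by (auto simp: rangesp_def nullsp_def I_P image_iff)
    show "rangesp P \<subseteq> nullsp (mat 1 - P)"
      by (auto simp: rangesp_def nullsp_def I_P PP)
  qed
  ultimately show ?thesis
    using obproj_eq[of "mat 1 - P"] by simp
qed

lemma complementary_rangesp_nullsp:
  fixes P :: "complex^'n^'n"
  assumes idem: "P ** P = P"
  shows "complementary (rangesp P) (nullsp P)"
  unfolding complementary_def
proof (intro conjI allI)
  have "P *v x = x" if "x \<in> rangesp P" for x
    using that idem by (auto simp: rangesp_def matrix_vector_mul_assoc)
  then show "rangesp P \<inter> nullsp P = {0}"
    using csubspace_0[OF rangesp_csubspace] csubspace_0[OF nullsp_csubspace]
    by (auto simp: nullsp_def)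
  show "\<exists>u\<in>rangesp P. \<exists>v\<in>nullsp P. x = u + v" for x
  proof (intro bexI)
    show "x = P *v x + (x - P *v x)"
      by simp
    show "x - P *v x \<in> nullsp P"
      using idem by (simp add: nullsp_def matrix_vector_mult_diff_distrib matrix_vector_mul_assoc)
  qed (rule rangespI)
qed (rule rangesp_csubspace nullsp_csubspace)+

section \<open>The projector \<open>(A P\<^sub>S)\<^sup>\<dagger> A\<close>\<close>

lemma cadj_mult_oproj: "csubspace S \<Longrightarrow> cadj (A ** oproj S) = oproj S ** cadj A"
  by (simp add: cadj_mult cadj_oproj)

lemma mult_oproj_apply: "csubspace S \<Longrightarrow> v \<in> S \<Longrightarrow> (A ** oproj S) *v v = A *v v"
  by (simp add: oproj_fixed flip: matrix_vector_mul_assoc)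

lemma rangesp_cadj_mult_oproj_subset:
  assumes S: "csubspace S"
  shows "rangesp (cadj (A ** oproj S)) \<subseteq> S \<inter> orthc (S \<inter> nullsp A)"
proof
  fix v assume "v \<in> rangesp (cadj (A ** oproj S))"
  then obtain w where "v = cadj (A ** oproj S) *v w"
    unfolding rangesp_def by blast
  then have v: "v = oproj S *v (cadj A *v w)"
    by (simp add: cadj_mult_oproj[OF S] matrix_vector_mul_assoc)
  have "cinner v n = 0" if n: "n \<in> S \<inter> nullsp A" for n
  proof -
    have "cinner v n = cinner (cadj A *v w) (oproj S *v n)"
      using cinner_cadj[of "oproj S" "cadj A *v w" n] cadj_oproj[OF S] v by simp
    also have "oproj S *v n = n"
      using n oproj_fixed[OF S] by blast
    also have "cinner (cadj A *v w) n = cinner w (A *v n)"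
      using cinner_cadj[of "cadj A" w n] by simp
    finally show ?thesis
      using n by (simp add: nullsp_def)
  qed
  then show "v \<in> S \<inter> orthc (S \<inter> nullsp A)"
    using oproj_in[OF S] v by (simp add: orthc_def)
qed

lemma rangesp_cadj_mult_oproj:
  assumes S: "csubspace S"
  shows "rangesp (cadj (A ** oproj S)) = S \<inter> orthc (S \<inter> nullsp A)"
proof
  let ?R = "rangesp (cadj (A ** oproj S))"
  show sub: "?R \<subseteq> S \<inter> orthc (S \<inter> nullsp A)"
    by (rule rangesp_cadj_mult_oproj_subset[OF S])
  show "S \<inter> orthc (S \<inter> nullsp A) \<subseteq> ?R"
  proof
    fix v assume v: "v \<in> S \<inter> orthc (S \<inter> nullsp A)"
    obtain u where u: "u \<in> ?R" and vu: "v - u \<in> orthc ?R"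
      using orthc_decomposition[OF rangesp_csubspace] by blast
    have "cinner x ((A ** oproj S) *v (v - u)) = 0" for x
      using orthcD'[OF vu rangespI, of x] cinner_cadj_right[of x "A ** oproj S" "v - u"] by simp
    then have "(A ** oproj S) *v (v - u) = 0"
      by (rule cinner_eq_0_all_imp)
    moreover have vu_S: "v - u \<in> S"
      using v u sub csubspace_diff[OF S] by blast
    moreover have "A *v (v - u) = (A ** oproj S) *v (v - u)"
      using mult_oproj_apply[OF S vu_S, of A] by simp
    ultimately have "v - u \<in> S \<inter> nullsp A"
      by (simp add: nullsp_def)
    moreover have "v - u \<in> orthc (S \<inter> nullsp A)"
      using v u sub csubspace_diff[OF orthc_csubspace] by blast
    ultimately have "v - u = 0"
      by (rule orthc_self_eq_0)
    with u show "v \<in> ?R"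
      by simp
  qed
qed

lemma mpinv_mult_oproj_in: "csubspace S \<Longrightarrow> mpinv (A ** oproj S) *v y \<in> S \<inter> orthc (S \<inter> nullsp A)"
  using mpinv_in_rangesp_cadj rangesp_cadj_mult_oproj by blast

lemma constrained_proj_idem:
  assumes S: "csubspace S"
  shows "(mpinv (A ** oproj S) ** A) ** (mpinv (A ** oproj S) ** A) = mpinv (A ** oproj S) ** A"
proof -
  have "mpinv (A ** oproj S) *v (A *v v) = v" if v: "v \<in> rangesp (cadj (A ** oproj S))" for v
  proof -
    have "v \<in> S"
      using v rangesp_cadj_mult_oproj[OF S] by blast
    then have "A *v v = (A ** oproj S) *v v"
      by (simp add: mult_oproj_apply[OF S])
    then show ?thesis
      using mpinv_mult_cancel[OF v] by simp
  qed
  then have "mpinv (A ** oproj S) *v (A *v (mpinv (A ** oproj S) *v y)) = mpinv (A ** oproj S) *v y" for y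
    using mpinv_in_rangesp_cadj by blast
  then show ?thesis
    by (simp add: matrix_eq flip: matrix_vector_mul_assoc)
qed

lemma rangesp_constrained_proj:
  assumes S: "csubspace S"
  shows "rangesp (mpinv (A ** oproj S) ** A) = rangesp (cadj (A ** oproj S))"
proof
  show "rangesp (mpinv (A ** oproj S) ** A) \<subseteq> rangesp (cadj (A ** oproj S))"
    using mpinv_in_rangesp_cadj by (auto simp: rangesp_def simp flip: matrix_vector_mul_assoc)
  show "rangesp (cadj (A ** oproj S)) \<subseteq> rangesp (mpinv (A ** oproj S) ** A)"
  proof
    fix v assume v: "v \<in> rangesp (cadj (A ** oproj S))"
    then have "(mpinv (A ** oproj S) ** A) *v (oproj S *v v) = v"
      using mpinv_mult_cancel[OF v] by (simp add: matrix_vector_mul_assoc matrix_mul_assoc)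
    then show "v \<in> rangesp (mpinv (A ** oproj S) ** A)"
      by (metis rangespI)
  qed
qed

lemma nullsp_constrained_proj:
  assumes S: "csubspace S"
  shows "nullsp (mpinv (A ** oproj S) ** A)
    = setsum (nullsp A) ((\<lambda>t. mpinv (cadj A ** A) *v t) ` orthc (setsum (nullsp A) S))"
proof -
  have "(mpinv (A ** oproj S) ** A) *v x = 0 \<longleftrightarrow> (cadj A ** A) *v x \<in> orthc S" for x
    by (simp add: mpinv_eq_0_iff cadj_mult_oproj[OF S] oproj_eq_0_iff[OF S]
        matrix_vector_mul_assoc matrix_mul_assoc flip: matrix_vector_mul_assoc)
  moreover have "(cadj A ** A) *v x \<in> orthc (nullsp A)" for x
    using rangesp_cadj_subset_orthc_nullsp rangespI by (metis matrix_vector_mul_assoc subsetD)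
  moreover have "orthc (setsum (nullsp A) S) = orthc (nullsp A) \<inter> orthc S"
    by (simp add: orthc_setsum csubspace_0 nullsp_csubspace S)
  ultimately have "nullsp (mpinv (A ** oproj S) ** A) = {x. (cadj A ** A) *v x \<in> orthc (setsum (nullsp A) S)}"
    by (auto simp: nullsp_def)
  also have "\<dots> = setsum (nullsp A) ((\<lambda>t. mpinv (cadj A ** A) *v t) ` orthc (setsum (nullsp A) S))"
    by (rule gram_preimage_eq_setsum) (simp add: orthc_setsum csubspace_0 nullsp_csubspace S)
  finally show ?thesis .
qed

section \<open>Equality-constrained least squares\<close>

lemma Xsp_eq_rangesp: "Xsp A1 A2 = rangesp (cadj (A1 ** oproj (nullsp A2)))"
proof -
  have "(\<lambda>x. oproj (nullsp A2) *v x) ` range (\<lambda>x. cadj A1 *v x)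
      = range (\<lambda>x. (oproj (nullsp A2) ** cadj A1) *v x)"
    by (auto simp: image_iff matrix_vector_mul_assoc)
  then show ?thesis
    by (simp add: Xsp_def rangesp_def cadj_mult_oproj[OF nullsp_csubspace])
qed

lemma rangesp_constrained_proj_eq_Xsp: "rangesp (mpinv (A1 ** oproj (nullsp A2)) ** A1) = Xsp A1 A2"
  by (simp add: Xsp_eq_rangesp rangesp_constrained_proj nullsp_csubspace)

lemma nullsp_constrained_proj_eq_Ysp: "nullsp (mpinv (A1 ** oproj (nullsp A2)) ** A1) = Ysp A1 A2"
  by (simp add: Ysp_def nullsp_constrained_proj nullsp_csubspace)

lemma obproj_Xsp_Ysp: "obproj (Xsp A1 A2) (Ysp A1 A2) = mpinv (A1 ** oproj (nullsp A2)) ** A1"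
  using obproj_eq[OF constrained_proj_idem[of "nullsp A2" A1, OF nullsp_csubspace]]
  by (simp add: rangesp_constrained_proj_eq_Xsp nullsp_constrained_proj_eq_Ysp)

lemma obproj_Ysp_Xsp: "obproj (Ysp A1 A2) (Xsp A1 A2) = mat 1 - mpinv (A1 ** oproj (nullsp A2)) ** A1"
  using obproj_complement[OF constrained_proj_idem[of "nullsp A2" A1, OF nullsp_csubspace]]
  by (simp add: rangesp_constrained_proj_eq_Xsp nullsp_constrained_proj_eq_Ysp)

lemma complementary_Xsp_Ysp: "complementary (Xsp A1 A2) (Ysp A1 A2)"
  using complementary_rangesp_nullsp[OF constrained_proj_idem[of "nullsp A2" A1, OF nullsp_csubspace]]
  by (simp add: rangesp_constrained_proj_eq_Xsp nullsp_constrained_proj_eq_Ysp)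

lemma xi_vec_eq:
  "xi_vec A1 b1 A2 b2 = mpinv A2 *v b2 + mpinv (A1 ** oproj (nullsp A2)) *v (b1 - A1 *v (mpinv A2 *v b2))"
proof -
  define x0 where "x0 = mpinv A2 *v b2"
  define a where "a = mpinv A1 *v b1"
  define B where "B = A1 ** oproj (nullsp A2)"
  \<comment> \<open>The residual of the unconstrained least-squares solution is invisible to \<open>B\<^sup>\<dagger>\<close>.\<close>
  have "cadj B *v (b1 - A1 *v a) = oproj (nullsp A2) *v (cadj A1 *v (b1 - A1 *v a))"
    by (simp add: B_def cadj_mult_oproj[OF nullsp_csubspace] matrix_vector_mul_assoc)
  also have "cadj A1 *v (b1 - A1 *v a) = 0"
    by (simp add: a_def matrix_vector_mult_diff_distrib mpinv_normal_equation)
  finally have "mpinv B *v (b1 - A1 *v a) = 0"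
    by (simp add: mpinv_eq_0_iff)
  then have Ba: "mpinv B *v (A1 *v a) = mpinv B *v b1"
    by (simp add: matrix_vector_mult_diff_distrib)
  have "xi_vec A1 b1 A2 b2 = a + (mat 1 - mpinv B ** A1) *v (x0 - a)"
    unfolding xi_vec_def obproj_Ysp_Xsp x0_def a_def B_def ..
  also have "\<dots> = x0 - mpinv B *v (A1 *v x0) + mpinv B *v (A1 *v a)"
    by (simp add: matrix_vector_mult_diff_rdistrib matrix_vector_mult_diff_distrib
        flip: matrix_vector_mul_assoc)
  finally show ?thesis
    by (simp add: Ba[unfolded B_def] x0_def B_def matrix_vector_mult_diff_distrib)
qed

lemma xi_vec_in_orthc: "xi_vec A1 b1 A2 b2 \<in> orthc (nullsp A1 \<inter> nullsp A2)"
proof -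
  have "mpinv A2 *v b2 \<in> orthc (nullsp A1 \<inter> nullsp A2)"
    using mpinv_in_rangesp_cadj rangesp_cadj_subset_orthc_nullsp orthc_antimono[of "nullsp A1 \<inter> nullsp A2"]
    by blast
  moreover have "mpinv (A1 ** oproj (nullsp A2)) *v y \<in> orthc (nullsp A1 \<inter> nullsp A2)" for y
    using mpinv_mult_oproj_in[of "nullsp A2" A1 y, OF nullsp_csubspace] by (simp add: Int_commute)
  ultimately show ?thesis
    unfolding xi_vec_eq using csubspace_add[OF orthc_csubspace] by blast
qed

lemma mem_Xi_set_iff: "x \<in> Xi_set A1 b1 A2 b2 \<longleftrightarrow> x - xi_vec A1 b1 A2 b2 \<in> nullsp A1 \<inter> nullsp A2"
  unfolding Xi_set_def by (auto simp: algebra_simps) (rule exI[of _ "x - xi_vec A1 b1 A2 b2"], simp)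

lemma lse_solutions_subset_Xi_set: "lse_solutions A1 b1 A2 b2 \<subseteq> Xi_set A1 b1 A2 b2"
proof
  fix x assume "x \<in> lse_solutions A1 b1 A2 b2"
  then have feasible: "A2 *v x = b2"
    and optimal: "\<And>x'. A2 *v x' = b2 \<Longrightarrow> (norm (A1 *v x - b1))\<^sup>2 \<le> (norm (A1 *v x' - b1))\<^sup>2"
    unfolding lse_solutions_def by blast+
  define x0 where "x0 = mpinv A2 *v b2"
  define B where "B = A1 ** oproj (nullsp A2)"
  define c where "c = b1 - A1 *v x0"
  define w where "w = mpinv B *v c"
  define d where "d = x - x0"
  have "A2 *v x0 = b2"
    using mult_mpinv_mult[of A2 x] by (simp add: x0_def feasible)
  then have d: "d \<in> nullsp A2"
    by (simp add: d_def nullsp_def feasible matrix_vector_mult_diff_distrib)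
  have w: "w \<in> nullsp A2"
    using mpinv_mult_oproj_in[of "nullsp A2" A1 c, OF nullsp_csubspace] by (simp add: w_def B_def)
  have dw: "d - w \<in> nullsp A2"
    using d w csubspace_diff[OF nullsp_csubspace] by blast
  have "A2 *v (x0 + w) = b2"
    using \<open>A2 *v x0 = b2\<close> w by (simp add: nullsp_def matrix_vector_right_distrib)
  then have le: "(norm (A1 *v x - b1))\<^sup>2 \<le> (norm (A1 *v (x0 + w) - b1))\<^sup>2"
    by (rule optimal)
  have eq1: "A1 *v x - b1 = B *v (d - w) + (B *v w - c)"
    using mult_oproj_apply[OF nullsp_csubspace d, of A1]
    by (simp add: B_def c_def d_def matrix_vector_mult_diff_distrib)
  have eq2: "A1 *v (x0 + w) - b1 = B *v w - c"
    using mult_oproj_apply[OF nullsp_csubspace w, of A1]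
    by (simp add: B_def c_def matrix_vector_right_distrib algebra_simps)
  have "(norm (B *v (d - w)))\<^sup>2 + (norm (B *v w - c))\<^sup>2 \<le> (norm (B *v w - c))\<^sup>2"
    using le unfolding eq1 eq2 least_squares_pythagoras[of B _ c, folded w_def] .
  then have "B *v (d - w) = 0"
    by simp
  then have "A1 *v (d - w) = 0"
    using mult_oproj_apply[OF nullsp_csubspace dw, of A1] by (simp add: B_def)
  moreover have "x - xi_vec A1 b1 A2 b2 = d - w"
    by (simp add: xi_vec_eq d_def w_def x0_def c_def B_def)
  ultimately show "x \<in> Xi_set A1 b1 A2 b2"
    using dw by (simp add: mem_Xi_set_iff nullsp_def)
qed

lemma nearest_point_of_coset:
  assumes N: "csubspace N" and \<xi>: "\<xi> \<in> orthc N"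
    and x: "x - \<xi> \<in> N" "x \<noteq> \<xi> + oproj N *v y"
  shows "norm (\<xi> + oproj N *v y - y) < norm (x - y)"
proof -
  define p where "p = \<xi> + oproj N *v y - y"
  define q where "q = x - \<xi> - oproj N *v y"
  have q: "q \<in> N"
    using x oproj_in[OF N] csubspace_diff[OF N] by (simp add: q_def)
  have "x = \<xi> + oproj N *v y" if "q = 0"
    using that by (simp add: q_def diff_eq_eq add.commute)
  with x(2) have "q \<noteq> 0"
    by blast
  have "cinner p q = cinner \<xi> q - cinner (y - oproj N *v y) q"
    by (simp add: p_def cinner_add_left cinner_diff_left algebra_simps)
  also have "\<dots> = 0"
    using orthcD[OF \<xi> q] orthcD[OF oproj_residual[OF N] q] by simp
  finally have "(norm (x - y))\<^sup>2 = (norm p)\<^sup>2 + (norm q)\<^sup>2"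
    using pythagoras_cinner[of p q] by (simp add: p_def q_def)
  with \<open>q \<noteq> 0\<close> have "(norm p)\<^sup>2 < (norm (x - y))\<^sup>2"
    by simp
  then show ?thesis
    by (simp add: p_def power_less_imp_less_base)
qed

lemma xi_vec_plus_oproj_in_Xi_set:
  "xi_vec A1 b1 A2 b2 + oproj (nullsp A1 \<inter> nullsp A2) *v y \<in> Xi_set A1 b1 A2 b2"
  using oproj_in[OF csubspace_Int[OF nullsp_csubspace nullsp_csubspace]]
  by (simp add: mem_Xi_set_iff)

lemma Xi_set_nearest_point:
  assumes "x \<in> Xi_set A1 b1 A2 b2" "x \<noteq> xi_vec A1 b1 A2 b2 + oproj (nullsp A1 \<inter> nullsp A2) *v y"
  shows "norm (xi_vec A1 b1 A2 b2 + oproj (nullsp A1 \<inter> nullsp A2) *v y - y) < norm (x - y)"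
  using nearest_point_of_coset[OF csubspace_Int[OF nullsp_csubspace nullsp_csubspace] xi_vec_in_orthc]
    assms
  by (simp add: mem_Xi_set_iff)

theorem corollary4:
  fixes A1 :: "complex^'n^'m" and b1 :: "complex^'m"
    and A2 :: "complex^'n^'k" and b2 :: "complex^'k"
  assumes "rank A2 = CARD('k)"
  shows "Xsp A1 A2 = nullsp A2 \<inter> orthc (nullsp A2 \<inter> nullsp A1)
    \<and> nullsp A1 \<inter> (\<lambda>x. mpinv (cadj A1 ** A1) *v x) ` orthc (setsum (nullsp A1) (nullsp A2)) = {0}
    \<and> complementary (Xsp A1 A2) (Ysp A1 A2)
    \<and> obproj (Xsp A1 A2) (Ysp A1 A2) = mat 1 - obproj (Ysp A1 A2) (Xsp A1 A2)
    \<and> obproj (Xsp A1 A2) (Ysp A1 A2) = mpinv (A1 ** (mat 1 - mpinv A2 ** A2)) ** A1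
    \<and> lse_solutions A1 b1 A2 b2 \<subseteq> Xi_set A1 b1 A2 b2
    \<and> xi_vec A1 b1 A2 b2 \<in> Xi_set A1 b1 A2 b2
    \<and> (\<forall>x\<in>Xi_set A1 b1 A2 b2. x \<noteq> xi_vec A1 b1 A2 b2 \<longrightarrow> norm (xi_vec A1 b1 A2 b2) < norm x)
    \<and> (\<forall>y :: complex^'n.
         (let \<psi> = xi_vec A1 b1 A2 b2 + oproj (nullsp A1 \<inter> nullsp A2) *v y in
           \<psi> \<in> Xi_set A1 b1 A2 b2 \<and>
           (\<forall>x\<in>Xi_set A1 b1 A2 b2. x \<noteq> \<psi> \<longrightarrow> norm (\<psi> - y) < norm (x - y))))"
  \<comment> \<open>The rank hypothesis only makes the constraint consistent.\<close>
proof (intro conjI)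
  show "Xsp A1 A2 = nullsp A2 \<inter> orthc (nullsp A2 \<inter> nullsp A1)"
    by (simp add: Xsp_eq_rangesp rangesp_cadj_mult_oproj nullsp_csubspace)
  show "nullsp A1 \<inter> (\<lambda>x. mpinv (cadj A1 ** A1) *v x) ` orthc (setsum (nullsp A1) (nullsp A2)) = {0}"
    by (rule nullsp_Int_mpinv_gram_image[OF csubspace_0[OF orthc_csubspace]])
  show "complementary (Xsp A1 A2) (Ysp A1 A2)"
    by (rule complementary_Xsp_Ysp)
  show "obproj (Xsp A1 A2) (Ysp A1 A2) = mat 1 - obproj (Ysp A1 A2) (Xsp A1 A2)"
    by (simp add: obproj_Xsp_Ysp obproj_Ysp_Xsp)
  show "obproj (Xsp A1 A2) (Ysp A1 A2) = mpinv (A1 ** (mat 1 - mpinv A2 ** A2)) ** A1"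
    by (simp add: obproj_Xsp_Ysp mat_1_minus_mpinv_mult)
  show "lse_solutions A1 b1 A2 b2 \<subseteq> Xi_set A1 b1 A2 b2"
    by (rule lse_solutions_subset_Xi_set)
  show "xi_vec A1 b1 A2 b2 \<in> Xi_set A1 b1 A2 b2"
    by (simp add: mem_Xi_set_iff nullsp_def)
  show "\<forall>x\<in>Xi_set A1 b1 A2 b2. x \<noteq> xi_vec A1 b1 A2 b2 \<longrightarrow> norm (xi_vec A1 b1 A2 b2) < norm x"
  proof (intro ballI impI)
    fix x assume "x \<in> Xi_set A1 b1 A2 b2" "x \<noteq> xi_vec A1 b1 A2 b2"
    then show "norm (xi_vec A1 b1 A2 b2) < norm x"
      using Xi_set_nearest_point[where y = 0] by simp
  qed
  show "\<forall>y :: complex^'n.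
         (let \<psi> = xi_vec A1 b1 A2 b2 + oproj (nullsp A1 \<inter> nullsp A2) *v y in
           \<psi> \<in> Xi_set A1 b1 A2 b2 \<and>
           (\<forall>x\<in>Xi_set A1 b1 A2 b2. x \<noteq> \<psi> \<longrightarrow> norm (\<psi> - y) < norm (x - y)))"
    unfolding Let_def using xi_vec_plus_oproj_in_Xi_set Xi_set_nearest_point by blast
qed

end
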